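(* Let $\pi$ be a $2$-sortable permutation. Then there exists a sequence of legal operations of the $\mathfrak{D}^2\mathfrak{I}$ machine that sorts $\pi$ and in which every occurrence of $d_0$ (resp. $d_1$, $d_2$) is performed in a configuration where condition ($\gamma$) (resp. ($\beta$), ($\alpha$)) holds.
   Context: The $\mathfrak{D}^2\mathfrak{I}$ machine consists of two decreasing stacks $D_1,D_2$ followed in series by an increasing stack $I$. Elements of $D_1,D_2$ must be in decreasing order from top to bottom (top largest); elements of $I$ in increasing order from top to bottom (top smallest). Operations: $d_0$ pushes the next input element (called $Input$) into $D_1$; $d_1$ moves $Top(D_1)$ to $D_2$; $d_2$ moves $Top(D_2)$ to $I$; $d_3$ pops $Top(I)$ and appends it to the output. An operation is legal if it respects the stack restrictions. A permutation is $2$-sortable if some sequence of legal operations outputs its elements in increasing order. Any comparison involving an empty stack is considered true. Conditions: ($\alpha$) $Top(D_2)<Top(I)$; ($\beta$) $Top(D_2)<Top(D_1)$ and $Top(D_1)<Top(I)$; ($\gamma$) $Top(D_1)<Input$, $Input<Top(I)$, and the sequence of input elements from $Input$ up to the first input element larger than $Top(D_2)$ is increasing. *)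

theory Defs
  imports Main
begin

text \<open>Configurations of the D2I machine. Stacks are lists whose head is the top.
  The output is a list in order of emission.\<close>

record config =
  inp  :: "nat list"
  dst1 :: "nat list"
  dst2 :: "nat list"
  ist  :: "nat list"
  outp :: "nat list"

datatype oper = Op0 | Op1 | Op2 | Op3

definition top_lt :: "nat list \<Rightarrow> nat \<Rightarrow> bool" where
  "top_lt S x = (S = [] \<or> hd S < x)"

definition lt_top :: "nat \<Rightarrow> nat list \<Rightarrow> bool" where
  "lt_top x S = (S = [] \<or> x < hd S)"

text \<open>Legal operations: D1, D2 decreasing top to bottom (top largest),
  I increasing top to bottom (top smallest).\<close>
fun step :: "oper \<Rightarrow> config \<Rightarrow> config option" where
  "step Op0 c = (case inp c of [] \<Rightarrow> None
     | x # r \<Rightarrow> if top_lt (dst1 c) x then Some (c\<lparr>inp := r, dst1 := x # dst1 c\<rparr>) else None)"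
| "step Op1 c = (case dst1 c of [] \<Rightarrow> None
     | x # r \<Rightarrow> if top_lt (dst2 c) x then Some (c\<lparr>dst1 := r, dst2 := x # dst2 c\<rparr>) else None)"
| "step Op2 c = (case dst2 c of [] \<Rightarrow> None
     | x # r \<Rightarrow> if lt_top x (ist c) then Some (c\<lparr>dst2 := r, ist := x # ist c\<rparr>) else None)"
| "step Op3 c = (case ist c of [] \<Rightarrow> None
     | x # r \<Rightarrow> Some (c\<lparr>ist := r, outp := outp c @ [x]\<rparr>))"

fun exec :: "oper list \<Rightarrow> config \<Rightarrow> config option" where
  "exec [] c = Some c"
| "exec (a # os) c = (case step a c of None \<Rightarrow> None | Some c' \<Rightarrow> exec os c')"

definition cond_alpha :: "config \<Rightarrow> bool" where
  "cond_alpha c = (dst2 c = [] \<or> ist c = [] \<or> hd (dst2 c) < hd (ist c))"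

definition cond_beta :: "config \<Rightarrow> bool" where
  "cond_beta c = ((dst2 c = [] \<or> dst1 c = [] \<or> hd (dst2 c) < hd (dst1 c)) \<and>
                  (dst1 c = [] \<or> ist c = [] \<or> hd (dst1 c) < hd (ist c)))"

definition gamma_segment :: "config \<Rightarrow> nat list" where
  "gamma_segment c =
     (let big = (\<lambda>x. top_lt (dst2 c) x)
      in takeWhile (\<lambda>x. \<not> big x) (inp c) @ take 1 (dropWhile (\<lambda>x. \<not> big x) (inp c)))"

definition cond_gamma :: "config \<Rightarrow> bool" where
  "cond_gamma c = (inp c \<noteq> [] \<and> top_lt (dst1 c) (hd (inp c)) \<and> lt_top (hd (inp c)) (ist c)
                   \<and> sorted_wrt (<) (gamma_segment c))"

fun op_cond :: "oper \<Rightarrow> config \<Rightarrow> bool" where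
  "op_cond Op0 c = cond_gamma c"
| "op_cond Op1 c = cond_beta c"
| "op_cond Op2 c = cond_alpha c"
| "op_cond Op3 c = True"

fun exec_guarded :: "oper list \<Rightarrow> config \<Rightarrow> config option" where
  "exec_guarded [] c = Some c"
| "exec_guarded (a # os) c =
     (if op_cond a c then (case step a c of None \<Rightarrow> None | Some c' \<Rightarrow> exec_guarded os c') else None)"

definition init_conf :: "nat list \<Rightarrow> config" where
  "init_conf p = \<lparr>inp = p, dst1 = [], dst2 = [], ist = [], outp = []\<rparr>"

definition sorted_conf :: "nat list \<Rightarrow> config" where
  "sorted_conf p = \<lparr>inp = [], dst1 = [], dst2 = [], ist = [], outp = sort p\<rparr>"

definition is_perm :: "nat list \<Rightarrow> bool" where
  "is_perm p = (distinct p \<and> set p = {1..length p})"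

definition sorts :: "oper list \<Rightarrow> nat list \<Rightarrow> bool" where
  "sorts os p = (exec os (init_conf p) = Some (sorted_conf p))"

definition two_sortable :: "nat list \<Rightarrow> bool" where
  "two_sortable p = (\<exists>os. sorts os p)"

end

theory Submission
  imports Defs
begin

text \<open>From any configuration that can still be sorted, perform the highest-priority operation
  (in the order \<open>d\<^sub>3, d\<^sub>2, d\<^sub>1, d\<^sub>0\<close>) after which sorting remains possible. Legality of
  \<open>d\<^sub>2\<close> is already (\<open>\<alpha>\<close>). If (\<open>\<beta>\<close>) or (\<open>\<gamma>\<close>) failed for the chosen \<open>d\<^sub>1\<close> or \<open>d\<^sub>0\<close>, then either
  Top(I) is the least remaining element, so \<open>d\<^sub>3\<close> would have been possible; or the move creates a
  blocked configuration, from which the sorted output is unreachable; or it enters a trap, a set of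
  configurations that a sorting run can only leave by \<open>d\<^sub>2\<close> or \<open>d\<^sub>3\<close> after some \<open>d\<^sub>0\<close>'s, and since
  these commute with \<open>d\<^sub>0\<close>, the \<open>d\<^sub>2\<close> or \<open>d\<^sub>3\<close> would have been possible before.\<close>

definition contents :: "config \<Rightarrow> nat list" where
  "contents c = inp c @ dst1 c @ dst2 c @ ist c @ outp c"

definition pending :: "config \<Rightarrow> nat set" where
  "pending c = set (inp c) \<union> set (dst1 c) \<union> set (dst2 c) \<union> set (ist c)"

definition valid_config :: "config \<Rightarrow> bool" where
  "valid_config c \<longleftrightarrow> distinct (contents c)
     \<and> sorted_wrt (>) (dst1 c) \<and> sorted_wrt (>) (dst2 c) \<and> sorted_wrt (<) (ist c)"

lemma step_Op0_eq_Some: "step Op0 c = Some c' \<longleftrightarrow>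
    (\<exists>x r. inp c = x # r \<and> top_lt (dst1 c) x \<and> c' = c\<lparr>inp := r, dst1 := x # dst1 c\<rparr>)"
  by (auto split: list.splits if_splits)

lemma step_Op1_eq_Some: "step Op1 c = Some c' \<longleftrightarrow>
    (\<exists>x r. dst1 c = x # r \<and> top_lt (dst2 c) x \<and> c' = c\<lparr>dst1 := r, dst2 := x # dst2 c\<rparr>)"
  by (auto split: list.splits if_splits)

lemma step_Op2_eq_Some: "step Op2 c = Some c' \<longleftrightarrow>
    (\<exists>x r. dst2 c = x # r \<and> lt_top x (ist c) \<and> c' = c\<lparr>dst2 := r, ist := x # ist c\<rparr>)"
  by (auto split: list.splits if_splits)

lemma step_Op3_eq_Some: "step Op3 c = Some c' \<longleftrightarrow>
    (\<exists>x r. ist c = x # r \<and> c' = c\<lparr>ist := r, outp := outp c @ [x]\<rparr>)"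
  by (auto split: list.splits if_splits)

lemmas step_eq_Some = step_Op0_eq_Some step_Op1_eq_Some step_Op2_eq_Some step_Op3_eq_Some

lemma exec_Cons_eq_Some:
  "exec (a # S) c = Some d \<longleftrightarrow> (\<exists>c'. step a c = Some c' \<and> exec S c' = Some d)"
  by (auto split: option.splits)

declare step.simps [simp del] exec.simps(2) [simp del]

lemma exec_guarded_imp_exec: "exec_guarded S c = Some d \<Longrightarrow> exec S c = Some d"
  by (induction S arbitrary: c) (auto simp: exec_Cons_eq_Some split: if_splits option.splits)

lemma top_lt_sorted_greater: "sorted_wrt (>) l \<Longrightarrow> top_lt l x \<Longrightarrow> y \<in> set l \<Longrightarrow> y < (x::nat)"
  by (cases l) (auto simp: top_lt_def)

lemma lt_top_sorted_less: "sorted_wrt (<) l \<Longrightarrow> lt_top x l \<Longrightarrow> y \<in> set l \<Longrightarrow> (x::nat) < y"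
  by (cases l) (auto simp: lt_top_def)

lemma valid_config_step: "step a c = Some c' \<Longrightarrow> valid_config c \<Longrightarrow> valid_config c'"
  by (cases a) (auto simp: step_eq_Some valid_config_def contents_def
      dest: top_lt_sorted_greater lt_top_sorted_less)

lemma exec_contents:
  "exec S c = Some d \<Longrightarrow> set (contents d) = set (contents c) \<and> (\<exists>r. outp d = outp c @ r)"
proof (induction S arbitrary: c)
  case (Cons a S)
  then obtain c' where "step a c = Some c'" "exec S c' = Some d"
    by (auto simp: exec_Cons_eq_Some)
  moreover from this(1) have "set (contents c') = set (contents c) \<and> (\<exists>r. outp c' = outp c @ r)"
    by (cases a) (auto simp: step_eq_Some contents_def)
  ultimately show ?case using Cons.IH by fastforce
qed simp

lemma step_commute:
  assumes "(a, b) \<in> {(Op0, Op2), (Op0, Op3), (Op1, Op3)}"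
    and "step a c = Some c1" and "step b c1 = Some c2"
  shows "\<exists>c3. step b c = Some c3 \<and> step a c3 = Some c2"
  using assms by (auto simp: step_eq_Some)

lemma exec_replicate_Op0_commute:
  assumes "b \<in> {Op2, Op3}" and "exec (replicate k Op0 @ b # S) c = Some d"
  shows "exec (b # replicate k Op0 @ S) c = Some d"
  using assms(2)
proof (induction k arbitrary: c)
  case (Suc k)
  then obtain c1 where c1: "step Op0 c = Some c1" "exec (replicate k Op0 @ b # S) c1 = Some d"
    by (auto simp: exec_Cons_eq_Some)
  from Suc.IH[OF c1(2)] obtain c2 where c2: "step b c1 = Some c2" "exec (replicate k Op0 @ S) c2 = Some d"
    by (auto simp: exec_Cons_eq_Some)
  from step_commute[OF _ c1(1) c2(1)] assms(1) obtain c3 where "step b c = Some c3" "step Op0 c3 = Some c2"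
    by auto
  with c2(2) show ?case by (auto simp: exec_Cons_eq_Some)
qed simp

definition weight :: "config \<Rightarrow> nat" where
  "weight c = 4 * length (inp c) + 3 * length (dst1 c) + 2 * length (dst2 c) + length (ist c)"

lemma weight_step_less: "step a c = Some c' \<Longrightarrow> weight c' < weight c"
  by (cases a) (auto simp: step_eq_Some weight_def)

definition output_before_pending :: "config \<Rightarrow> bool" where
  "output_before_pending c \<longleftrightarrow> (\<forall>z\<in>set (outp c). \<forall>w\<in>pending c. z < w)"

text \<open>In a blocked configuration \<open>z \<in> I\<close> can be output only after the smaller \<open>w\<close> has passed through
  D2 to I. But \<open>w\<close> can neither enter nor leave D2 while the larger \<open>y \<in> D2\<close> is there, and \<open>y\<close>
  (like \<open>x \<in> D1\<close>, which has to pass through D2) can move onto I only after \<open>z\<close> is gone.\<close>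

definition blocked_D2 :: "config \<Rightarrow> bool" where
  "blocked_D2 c \<longleftrightarrow> (\<exists>y z w. y \<in> set (dst2 c) \<and> z \<in> set (ist c)
     \<and> w \<in> set (inp c) \<union> set (dst1 c) \<union> set (dst2 c) \<and> w < z \<and> z < y)"

definition blocked_D1 :: "config \<Rightarrow> bool" where
  "blocked_D1 c \<longleftrightarrow> (\<exists>x z w. x \<in> set (dst1 c) \<and> z \<in> set (ist c)
     \<and> w \<in> set (inp c) \<union> set (dst1 c) \<and> w < z \<and> z < x)"

definition blocked :: "config \<Rightarrow> bool" where
  "blocked c \<longleftrightarrow> blocked_D2 c \<or> blocked_D1 c"

lemma blocked_step_Op0: "step Op0 c = Some c' \<Longrightarrow> blocked c \<Longrightarrow> blocked c'"
  unfolding blocked_def blocked_D2_def blocked_D1_def step_Op0_eq_Some by fastforce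

lemma blocked_step_Op1:
  assumes "valid_config c" and "step Op1 c = Some c'" and "blocked c"
  shows "blocked c'"
proof -
  obtain b q where bq: "dst1 c = b # q" "c' = c\<lparr>dst1 := q, dst2 := b # dst2 c\<rparr>"
    using assms(2) by (auto simp: step_Op1_eq_Some)
  have below_b: "x < b" if "x \<in> set q" for x
    using assms(1) bq(1) that by (auto simp: valid_config_def)
  show ?thesis
    using assms(3)[unfolded blocked_def]
  proof
    assume "blocked_D2 c"
    then show ?thesis using bq by (auto simp: blocked_def blocked_D2_def)
  next
    assume "blocked_D1 c"
    then obtain x z w where xzw: "x \<in> set (dst1 c)" "z \<in> set (ist c)"
        "w \<in> set (inp c) \<union> set (dst1 c)" "w < z" "z < x"
      unfolding blocked_D1_def by blast
    show ?thesis
    proof (cases "x = b")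
      case True
      then have "blocked_D2 c'" using xzw bq unfolding blocked_D2_def by auto
      then show ?thesis by (simp add: blocked_def)
    next
      case False
      then have "x \<in> set q" using xzw(1) bq(1) by simp
      with xzw have "blocked_D1 c'" using bq below_b unfolding blocked_D1_def by fastforce
      then show ?thesis by (simp add: blocked_def)
    qed
  qed
qed

lemma blocked_step_Op2:
  assumes "valid_config c" and "step Op2 c = Some c'" and "blocked c"
  shows "blocked c'"
proof -
  obtain b q where bq: "dst2 c = b # q" "lt_top b (ist c)" "c' = c\<lparr>dst2 := q, ist := b # ist c\<rparr>"
    using assms(2) by (auto simp: step_Op2_eq_Some)
  show ?thesis
    using assms(3)[unfolded blocked_def]
  proof
    assume "blocked_D2 c"
    then obtain y z w where yzw: "y \<in> set (dst2 c)" "z \<in> set (ist c)"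
        "w \<in> set (inp c) \<union> set (dst1 c) \<union> set (dst2 c)" "w < z" "z < y"
      unfolding blocked_D2_def by blast
    have "b < z" using lt_top_sorted_less assms(1) bq(2) yzw(2) by (auto simp: valid_config_def)
    then have "y \<in> set q" using yzw(1,5) bq(1) by auto
    then have "y < b" using assms(1) bq(1) by (auto simp: valid_config_def)
    then have "w \<noteq> b" using yzw(4,5) by simp
    then have "blocked_D2 c'" using yzw \<open>y \<in> set q\<close> bq unfolding blocked_D2_def by fastforce
    then show ?thesis by (simp add: blocked_def)
  next
    assume "blocked_D1 c"
    then show ?thesis using bq by (auto simp: blocked_def blocked_D1_def)
  qed
qed

lemma blocked_step_Op3:
  assumes "output_before_pending c'" and "step Op3 c = Some c'" and "blocked c"
  shows "blocked c'"
proof -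
  obtain h r where hr: "ist c = h # r" "c' = c\<lparr>ist := r, outp := outp c @ [h]\<rparr>"
    using assms(2) by (auto simp: step_Op3_eq_Some)
  have "h \<in> set (outp c')" "set (inp c) \<union> set (dst1 c) \<union> set (dst2 c) \<subseteq> pending c'"
    using hr by (auto simp: pending_def)
  then have h_below: "h < w" if "w \<in> set (inp c) \<union> set (dst1 c) \<union> set (dst2 c)" for w
    using assms(1) that unfolding output_before_pending_def by blast
  show ?thesis
    using assms(3) h_below unfolding blocked_def blocked_D2_def blocked_D1_def
    by (simp add: hr) (blast dest: less_asym)
qed

lemma blocked_step:
  "valid_config c \<Longrightarrow> output_before_pending c' \<Longrightarrow> step a c = Some c' \<Longrightarrow> blocked c \<Longrightarrow> blocked c'"
  by (cases a) (auto intro: blocked_step_Op0 blocked_step_Op1 blocked_step_Op2 blocked_step_Op3)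

lemma cond_alpha_if_step_Op2: "step Op2 c = Some c' \<Longrightarrow> cond_alpha c"
  by (auto simp: step_Op2_eq_Some cond_alpha_def lt_top_def)

lemma gamma_segment_sorted:
  assumes inp: "inp c = x # r"
    and run: "\<And>t q. dst2 c = t # q \<Longrightarrow> \<not> t < x \<Longrightarrow>
      sorted_wrt (<) (x # takeWhile (\<lambda>a. \<not> t < a) r)"
  shows "sorted_wrt (<) (gamma_segment c)"
proof (cases "top_lt (dst2 c) x")
  case True
  then show ?thesis using inp by (simp add: gamma_segment_def)
next
  case False
  then obtain t q where tq: "dst2 c = t # q" "\<not> t < x"
    by (cases "dst2 c") (auto simp: top_lt_def)
  let ?small = "\<lambda>a. \<not> t < a"
  have seg: "gamma_segment c = (x # takeWhile ?small r) @ take 1 (dropWhile ?small r)"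
    using inp tq by (simp add: gamma_segment_def top_lt_def Let_def)
  have small: "a \<le> t" if "a \<in> set (x # takeWhile ?small r)" for a
    using that tq(2) by (auto dest: set_takeWhileD)
  have big: "t < b" if "b \<in> set (take 1 (dropWhile ?small r))" for b
    using that by (cases "dropWhile ?small r") (auto simp: dropWhile_eq_Cons_conv)
  have "sorted_wrt (<) (take 1 xs)" for xs :: "nat list"
    by (cases xs) auto
  moreover have "a < b" if "a \<in> set (x # takeWhile ?small r)" "b \<in> set (take 1 (dropWhile ?small r))" for a b
    using small[OF that(1)] big[OF that(2)] by simp
  ultimately show ?thesis
    unfolding seg sorted_wrt_append using run[OF tq] by blast
qed

locale sorting_target =
  fixes T :: config
  assumes stacks_empty: "inp T = []" "dst1 T = []" "dst2 T = []" "ist T = []"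
    and output_sorted: "sorted (outp T)"
begin

definition reaches :: "config \<Rightarrow> bool" where
  "reaches c \<longleftrightarrow> (\<exists>S. exec S c = Some T)"

definition safe :: "oper \<Rightarrow> config \<Rightarrow> bool" where
  "safe a c \<longleftrightarrow> (\<exists>c'. step a c = Some c' \<and> reaches c')"

lemma reaches_step: "step a c = Some c' \<Longrightarrow> reaches c' \<Longrightarrow> reaches c"
  unfolding reaches_def by (metis exec_Cons_eq_Some)

lemma safe_if_exec: "exec (a # S) c = Some T \<Longrightarrow> safe a c"
  unfolding safe_def reaches_def exec_Cons_eq_Some by blast

lemma output_before_pending_if_reaches:
  assumes "reaches c" and "valid_config c"
  shows "output_before_pending c"
proof -
  obtain S where "exec S c = Some T" using assms(1) unfolding reaches_def by blast
  from exec_contents[OF this] obtain r where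
    r: "set (contents T) = set (contents c)" "outp T = outp c @ r" by blast
  have distinct: "z \<noteq> w" if "z \<in> set (outp c)" "w \<in> pending c" for z w
    using that assms(2) by (auto simp: contents_def pending_def valid_config_def)
  have "set (outp T) = set (contents c)"
    using r(1) stacks_empty by (simp add: contents_def)
  then have in_r: "w \<in> set r" if "w \<in> pending c" for w
    using that distinct[of w w] r(2) by (auto simp: contents_def pending_def)
  have sorted: "z \<le> w" if "z \<in> set (outp c)" "w \<in> set r" for z w
    using output_sorted that unfolding r(2) sorted_append by blast
  show ?thesis
    unfolding output_before_pending_def
    using in_r distinct sorted by (blast intro: le_neq_trans)
qed

lemma not_blocked_if_reaches:
  assumes "reaches c" and "valid_config c"
  shows "\<not> blocked c"
proof -
  obtain S where "exec S c = Some T" using assms(1) unfolding reaches_def by blast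
  then show ?thesis using assms(2)
  proof (induction S arbitrary: c)
    case Nil
    then show ?case using stacks_empty by (simp add: blocked_def blocked_D2_def blocked_D1_def)
  next
    case (Cons a S)
    then obtain c' where c': "step a c = Some c'" "exec S c' = Some T"
      by (auto simp: exec_Cons_eq_Some)
    have "valid_config c'" using valid_config_step c'(1) Cons.prems(2) .
    with c'(2) have "\<not> blocked c'" "output_before_pending c'"
      using Cons.IH output_before_pending_if_reaches unfolding reaches_def by blast+
    then show ?case using blocked_step Cons.prems(2) c'(1) by blast
  qed
qed

text \<open>Popping the least remaining element never hurts: any sorting run can be reordered to
  do it first, since \<open>d\<^sub>0\<close> and \<open>d\<^sub>1\<close> commute with \<open>d\<^sub>3\<close> and \<open>d\<^sub>2\<close> cannot occur before it.\<close>

lemma safe_Op3_if_top_minimal: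
  assumes "reaches c" and "ist c = z # r" and "\<forall>w\<in>pending c. z \<le> w"
  shows "safe Op3 c"
proof -
  obtain S where "exec S c = Some T" using assms(1) unfolding reaches_def by blast
  then show ?thesis using assms(2,3)
  proof (induction S arbitrary: c)
    case Nil
    then show ?case using stacks_empty by simp
  next
    case (Cons a S)
    then obtain c' where c': "step a c = Some c'" "exec S c' = Some T"
      by (auto simp: exec_Cons_eq_Some)
    consider "a = Op3" | "a = Op2" | "a \<in> {Op0, Op1}" by (cases a) auto
    then show ?case
    proof cases
      case 1
      then show ?thesis using Cons.prems(1) by (simp add: safe_if_exec)
    next
      case 2
      then obtain b q where "dst2 c = b # q" "lt_top b (ist c)"
        using c'(1) by (auto simp: step_Op2_eq_Some)
      then show ?thesis using Cons.prems(2,3) by (auto simp: lt_top_def pending_def)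
    next
      case 3
      then have same: "ist c' = ist c" "pending c' = pending c"
        using c'(1) by (auto simp: step_eq_Some pending_def)
      have "safe Op3 c'"
        using Cons.IH[OF c'(2)] Cons.prems(2,3) unfolding same by blast
      then obtain c2 where c2: "step Op3 c' = Some c2" "reaches c2" unfolding safe_def by blast
      obtain c3 where c3: "step Op3 c = Some c3" "step a c3 = Some c2"
        using step_commute[OF _ c'(1) c2(1)] 3 by auto
      have "reaches c3" using c3(2) c2(2) by (rule reaches_step)
      then show ?thesis using c3(1) unfolding safe_def by blast
    qed
  qed
qed

lemma smaller_pending_if_not_safe_Op3:
  assumes "reaches c" and "valid_config c" and "ist c = z # r" and "\<not> safe Op3 c"
  obtains w where "w \<in> set (inp c) \<union> set (dst1 c) \<union> set (dst2 c)" and "w < z"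
proof -
  obtain w where w: "w \<in> pending c" "w < z"
    using safe_Op3_if_top_minimal[OF assms(1,3)] assms(4) by (meson not_le)
  have "w \<notin> set (ist c)"
    using assms(2,3) w(2) by (auto simp: valid_config_def)
  then show ?thesis using that w unfolding pending_def by blast
qed

text \<open>Inside a trap \<open>d\<^sub>1\<close> is fatal and \<open>d\<^sub>0\<close> stays inside, so a trap is left only by \<open>d\<^sub>2\<close> or \<open>d\<^sub>3\<close>.\<close>

definition trap :: "(config \<Rightarrow> bool) \<Rightarrow> bool" where
  "trap Q \<longleftrightarrow> \<not> Q T
     \<and> (\<forall>c c'. Q c \<longrightarrow> valid_config c \<longrightarrow> step Op0 c = Some c' \<longrightarrow> Q c')
     \<and> (\<forall>c. Q c \<longrightarrow> valid_config c \<longrightarrow> \<not> safe Op1 c)"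

lemma trap_sorting_run:
  assumes "trap Q" and "exec S c = Some T" and "Q c" and "valid_config c"
  shows "\<exists>k b S'. b \<in> {Op2, Op3} \<and> S = replicate k Op0 @ b # S'"
  using assms(2-4)
proof (induction S arbitrary: c)
  case Nil
  then show ?case using assms(1) by (simp add: trap_def)
next
  case (Cons a S)
  then obtain c' where c': "step a c = Some c'" "exec S c' = Some T"
    by (auto simp: exec_Cons_eq_Some)
  show ?case
  proof (cases a)
    case Op0
    have "Q c'" "valid_config c'"
      using assms(1) Cons.prems(2,3) c'(1) valid_config_step unfolding Op0 trap_def by blast+
    then obtain k b S' where "b \<in> {Op2, Op3}" "S = replicate k Op0 @ b # S'"
      using Cons.IH c'(2) by blast
    then show ?thesis using Op0 by (intro exI[of _ "Suc k"]) auto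
  next
    case Op1
    then have "safe Op1 c" using Cons.prems(1) safe_if_exec by blast
    then show ?thesis using assms(1) Cons.prems(2,3) by (simp add: trap_def)
  qed (intro exI[of _ 0]; simp)+
qed

lemma safe_Op2_or_Op3_if_trap_after_Op0:
  assumes "trap Q" and "valid_config c" and "step Op0 c = Some c'" and "Q c'" and "reaches c'"
  shows "safe Op2 c \<or> safe Op3 c"
proof -
  obtain S where S: "exec S c' = Some T" using assms(5) unfolding reaches_def by blast
  obtain k b S' where b: "b \<in> {Op2, Op3}" and S_eq: "S = replicate k Op0 @ b # S'"
    using trap_sorting_run[OF assms(1) S assms(4) valid_config_step[OF assms(3,2)]] by blast
  have "exec (replicate (Suc k) Op0 @ b # S') c = Some T"
    using assms(3) S unfolding S_eq by (simp add: exec_Cons_eq_Some)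
  then have "exec (b # replicate (Suc k) Op0 @ S') c = Some T"
    by (rule exec_replicate_Op0_commute[OF b])
  then have "safe b c" by (rule safe_if_exec)
  then show ?thesis using b by auto
qed

definition blocked_D1_by_D2 :: "config \<Rightarrow> bool" where
  "blocked_D1_by_D2 c \<longleftrightarrow> (\<exists>x z w. x \<in> set (dst1 c) \<and> z \<in> set (ist c) \<and> w \<in> set (dst2 c)
     \<and> w < z \<and> z < x)"

lemma trap_blocked_D1_by_D2: "trap blocked_D1_by_D2"
  unfolding trap_def
proof (intro conjI allI impI)
  show "\<not> blocked_D1_by_D2 T" using stacks_empty by (simp add: blocked_D1_by_D2_def)
next
  fix c c'
  assume "blocked_D1_by_D2 c" and "step Op0 c = Some c'"
  then show "blocked_D1_by_D2 c'" by (fastforce simp: blocked_D1_by_D2_def step_Op0_eq_Some)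
next
  fix c
  assume blocked: "blocked_D1_by_D2 c" and valid: "valid_config c"
  show "\<not> safe Op1 c"
  proof
    assume "safe Op1 c"
    then obtain c' where c': "step Op1 c = Some c'" "reaches c'" unfolding safe_def by blast
    then obtain y q where y: "dst1 c = y # q" "c' = c\<lparr>dst1 := q, dst2 := y # dst2 c\<rparr>"
      by (auto simp: step_Op1_eq_Some)
    obtain x z w where xzw: "x \<in> set (dst1 c)" "z \<in> set (ist c)" "w \<in> set (dst2 c)" "w < z" "z < x"
      using blocked unfolding blocked_D1_by_D2_def by blast
    have "x \<le> y" using valid xzw(1) y(1) by (auto simp: valid_config_def)
    then have "blocked_D2 c'"
      using xzw y unfolding blocked_D2_def by (intro exI[of _ y] exI[of _ z] exI[of _ w]) auto
    then show False
      using not_blocked_if_reaches c'(2) valid_config_step[OF c'(1) valid] by (simp add: blocked_def)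
  qed
qed

text \<open>The failure of the monotonicity clause of (\<open>\<gamma>\<close>) after \<open>d\<^sub>0\<close>: Top(D1) cannot move onto D2, and the
  elements not exceeding Top(D2) that follow it in the input do not increase.\<close>

definition unsorted_run :: "config \<Rightarrow> bool" where
  "unsorted_run c \<longleftrightarrow> (\<exists>t q d p. dst2 c = t # q \<and> dst1 c = d # p \<and> \<not> t < d
     \<and> \<not> sorted_wrt (<) (d # takeWhile (\<lambda>a. \<not> t < a) (inp c)))"

lemma trap_unsorted_run: "trap unsorted_run"
  unfolding trap_def
proof (intro conjI allI impI)
  show "\<not> unsorted_run T" using stacks_empty by (simp add: unsorted_run_def)
next
  fix c c'
  assume "unsorted_run c" and st: "step Op0 c = Some c'"
  then obtain t q d p where run: "dst2 c = t # q" "dst1 c = d # p" "\<not> t < d"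
      "\<not> sorted_wrt (<) (d # takeWhile (\<lambda>a. \<not> t < a) (inp c))"
    unfolding unsorted_run_def by blast
  from st obtain a r where a: "inp c = a # r" "top_lt (dst1 c) a" "c' = c\<lparr>inp := r, dst1 := a # dst1 c\<rparr>"
    unfolding step_Op0_eq_Some by blast
  have "d < a" using a(2) run(2) by (simp add: top_lt_def)
  with run(4) a(1) have "\<not> t < a" "\<not> sorted_wrt (<) (a # takeWhile (\<lambda>a. \<not> t < a) r)"
    by (auto split: if_splits) (meson less_trans)
  then show "unsorted_run c'" using run(1) a(3) unfolding unsorted_run_def by auto
next
  fix c
  assume "unsorted_run c"
  then show "\<not> safe Op1 c" by (auto simp: unsorted_run_def safe_def step_Op1_eq_Some top_lt_def)
qed

lemma cond_beta_if_safe_Op1: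
  assumes valid: "valid_config c" and "safe Op1 c" and "\<not> safe Op3 c"
  shows "cond_beta c"
proof -
  obtain c' where c': "step Op1 c = Some c'" "reaches c'" using assms(2) unfolding safe_def by blast
  then obtain y q where y: "dst1 c = y # q" "top_lt (dst2 c) y" "c' = c\<lparr>dst1 := q, dst2 := y # dst2 c\<rparr>"
    by (auto simp: step_Op1_eq_Some)
  have "y < z" if z: "ist c = z # r" for z r
  proof (rule ccontr)
    assume "\<not> y < z"
    moreover have "y \<noteq> z" using valid y(1) z by (auto simp: valid_config_def contents_def)
    ultimately have "z < y" by simp
    obtain w where "w \<in> set (inp c) \<union> set (dst1 c) \<union> set (dst2 c)" "w < z"
      using smaller_pending_if_not_safe_Op3 reaches_step[OF c'] valid z assms(3) by blast
    with \<open>z < y\<close> have "blocked_D2 c'"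
      using y z unfolding blocked_D2_def by (intro exI[of _ y] exI[of _ z] exI[of _ w]) auto
    then show False
      using not_blocked_if_reaches c'(2) valid_config_step[OF c'(1) valid] by (simp add: blocked_def)
  qed
  then show ?thesis using y unfolding cond_beta_def top_lt_def by (cases "ist c") auto
qed

lemma input_below_top_ist:
  assumes valid: "valid_config c" and "safe Op0 c" and "\<not> safe Op2 c" and "\<not> safe Op3 c"
    and x: "inp c = x # r"
  shows "lt_top x (ist c)"
proof -
  obtain c' where c': "step Op0 c = Some c'" "reaches c'" using assms(2) unfolding safe_def by blast
  then have c'_eq: "c' = c\<lparr>inp := r, dst1 := x # dst1 c\<rparr>" using x by (auto simp: step_Op0_eq_Some)
  have "x < z" if z: "ist c = z # rz" for z rz
  proof (rule ccontr)
    assume "\<not> x < z"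
    moreover have "x \<noteq> z" using valid x z by (auto simp: valid_config_def contents_def)
    ultimately have "z < x" by simp
    obtain w where w: "w \<in> set (inp c) \<union> set (dst1 c) \<union> set (dst2 c)" "w < z"
      using smaller_pending_if_not_safe_Op3 reaches_step[OF c'] valid z assms(4) by blast
    show False
    proof (cases "w \<in> set (dst2 c)")
      case True
      with \<open>z < x\<close> w(2) have "blocked_D1_by_D2 c'"
        using z c'_eq unfolding blocked_D1_by_D2_def by (intro exI[of _ x] exI[of _ z] exI[of _ w]) auto
      then show False
        using safe_Op2_or_Op3_if_trap_after_Op0[OF trap_blocked_D1_by_D2 valid c'(1) _ c'(2)] assms(3,4)
        by blast
    next
      case False
      with \<open>z < x\<close> w x have "blocked_D1 c'"
        using z c'_eq unfolding blocked_D1_def by (intro exI[of _ x] exI[of _ z] exI[of _ w]) auto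
      then show False
        using not_blocked_if_reaches c'(2) valid_config_step[OF c'(1) valid] by (simp add: blocked_def)
    qed
  qed
  then show ?thesis unfolding lt_top_def by (cases "ist c") auto
qed

lemma gamma_segment_sorted_if_safe_Op0:
  assumes valid: "valid_config c" and "safe Op0 c" and "\<not> safe Op2 c" and "\<not> safe Op3 c"
  shows "sorted_wrt (<) (gamma_segment c)"
proof -
  obtain c' where c': "step Op0 c = Some c'" "reaches c'" using assms(2) unfolding safe_def by blast
  then obtain x r where x: "inp c = x # r" "c' = c\<lparr>inp := r, dst1 := x # dst1 c\<rparr>"
    by (auto simp: step_Op0_eq_Some)
  show ?thesis
  proof (rule gamma_segment_sorted[OF x(1)], rule ccontr)
    fix t q
    assume "dst2 c = t # q" "\<not> t < x" "\<not> sorted_wrt (<) (x # takeWhile (\<lambda>a. \<not> t < a) r)"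
    then have "unsorted_run c'" using x(2) unfolding unsorted_run_def by auto
    then show False
      using safe_Op2_or_Op3_if_trap_after_Op0[OF trap_unsorted_run valid c'(1) _ c'(2)] assms(3,4)
      by blast
  qed
qed

lemma cond_gamma_if_safe_Op0:
  assumes "valid_config c" and "safe Op0 c" and "\<not> safe Op2 c" and "\<not> safe Op3 c"
  shows "cond_gamma c"
proof -
  obtain c' x r where "step Op0 c = Some c'" "inp c = x # r" "top_lt (dst1 c) x"
    using assms(2) unfolding safe_def step_Op0_eq_Some by blast
  then show ?thesis
    using input_below_top_ist[OF assms] gamma_segment_sorted_if_safe_Op0[OF assms]
    unfolding cond_gamma_def by simp
qed

lemma guarded_safe_step:
  assumes "valid_config c" and "reaches c" and "c \<noteq> T"
  shows "\<exists>a. op_cond a c \<and> safe a c"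
proof -
  obtain S where S: "exec S c = Some T" using assms(2) unfolding reaches_def by blast
  with assms(3) obtain a S' where "exec (a # S') c = Some T" by (cases S) auto
  then have "safe a c" by (rule safe_if_exec)
  consider "safe Op3 c" | "\<not> safe Op3 c" "safe Op2 c" | "\<not> safe Op3 c" "\<not> safe Op2 c" "safe Op1 c"
    | "\<not> safe Op3 c" "\<not> safe Op2 c" "\<not> safe Op1 c" "safe Op0 c"
    using \<open>safe a c\<close> by (cases a) auto
  then show ?thesis
  proof cases
    case 1
    then show ?thesis by (intro exI[of _ Op3]) simp
  next
    case 2
    then show ?thesis by (intro exI[of _ Op2]) (auto simp: safe_def intro: cond_alpha_if_step_Op2)
  next
    case 3
    then show ?thesis using cond_beta_if_safe_Op1 assms(1) by (intro exI[of _ Op1]) simp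
  next
    case 4
    then show ?thesis using cond_gamma_if_safe_Op0 assms(1) by (intro exI[of _ Op0]) simp
  qed
qed

lemma exec_guarded_if_reaches:
  "valid_config c \<Longrightarrow> reaches c \<Longrightarrow> \<exists>S. exec_guarded S c = Some T"
proof (induction "weight c" arbitrary: c rule: less_induct)
  case less
  show ?case
  proof (cases "c = T")
    case True
    then show ?thesis by (intro exI[of _ "[]"]) simp
  next
    case False
    then obtain a c' where "op_cond a c" "step a c = Some c'" "reaches c'"
      using guarded_safe_step less.prems unfolding safe_def by blast
    moreover obtain S where "exec_guarded S c' = Some T"
      using less.hyps weight_step_less valid_config_step less.prems(1) calculation(2,3) by blast
    ultimately show ?thesis by (intro exI[of _ "a # S"]) simp
  qed
qed

end

theorem mainTheorem9:
  fixes p :: "nat list"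
  assumes "is_perm p" and "two_sortable p"
  shows "\<exists>os. sorts os p \<and> exec_guarded os (init_conf p) = Some (sorted_conf p)"
proof -
  interpret sorting_target "sorted_conf p"
    by unfold_locales (simp_all add: sorted_conf_def)
  have "valid_config (init_conf p)"
    using assms(1) by (simp add: valid_config_def contents_def init_conf_def is_perm_def)
  moreover have "reaches (init_conf p)"
    using assms(2) by (simp add: two_sortable_def sorts_def reaches_def)
  ultimately obtain os where "exec_guarded os (init_conf p) = Some (sorted_conf p)"
    using exec_guarded_if_reaches by blast
  then show ?thesis using exec_guarded_imp_exec unfolding sorts_def by blast
qed

end
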